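(* Let $\mathcal{X}=\{0,1\}^{\mathbb{N}}$ with the product topology. For $\eta=(\eta_1,\eta_2,\ldots)\in\mathcal{X}$ let $a_n(\eta)=\#\{1\le i\le n:\eta_i=1\}$, let $\mathcal{Y}\subset\mathcal{X}$ be the set of $\eta$ for which $q(\eta)=\lim_{n\to\infty}a_n(\eta)/n$ exists, and let $\mathcal{Z}_{1/2}=\{\eta\in\mathcal{Y}: q(\eta)=1/2\}$. Fix $\rho>1$. For a subset $\mathcal{Z}\subset\mathcal{Y}$ and continuous functions $x,y:\mathcal{Z}\to[0,\infty)$ define the function $x\oplus y$ on $\mathcal{Z}$ pointwise by $$(x\oplus y)(\eta)=\sup_{p\in[0,1]\cap\mathbb{Q}}\rho^{-\mathrm{KL}(p;q(\eta))}x(\eta)^py(\eta)^{1-p}.$$ Then $x\oplus y=y\oplus x$ for all continuous $x,y:\mathcal{Z}\to[0,\infty)$ if and only if $\mathcal{Z}\subset\mathcal{Z}_{1/2}$.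
   Context: $\mathrm{KL}(p;q)=p\log\frac{p}{q}+(1-p)\log\frac{1-p}{1-q}$ for $p,q\in[0,1]$, with the conventions $0\log(0/a)=0$ for all $a\ge0$, $a\log(a/0)=+\infty$ for $a>0$, $\rho^{-\infty}=0$, and $0^0=1$. *)

theory Defs
  imports "HOL-Analysis.Analysis"
begin

text \<open>The space X = {0,1}^N with the product topology. A point eta is a
  function nat => bool; eta_{i+1} (paper, 1-indexed) is eta i here (0-indexed).\<close>
definition cantorX :: "(nat \<Rightarrow> bool) topology" where
  "cantorX = product_topology (\<lambda>_. discrete_topology (UNIV :: bool set)) UNIV"

definition a_cnt :: "nat \<Rightarrow> (nat \<Rightarrow> bool) \<Rightarrow> nat" where
  "a_cnt n \<eta> = card {i. i < n \<and> \<eta> i}"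

definition Yset :: "(nat \<Rightarrow> bool) set" where
  "Yset = {\<eta>. convergent (\<lambda>n. real (a_cnt n \<eta>) / real n)}"

definition qlim :: "(nat \<Rightarrow> bool) \<Rightarrow> real" where
  "qlim \<eta> = lim (\<lambda>n. real (a_cnt n \<eta>) / real n)"

definition Zhalf :: "(nat \<Rightarrow> bool) set" where
  "Zhalf = {\<eta> \<in> Yset. qlim \<eta> = 1/2}"

definition xlogxy :: "real \<Rightarrow> real \<Rightarrow> ereal" where
  "xlogxy a b = (if a = 0 then 0 else if b = 0 then \<infinity> else ereal (a * ln (a / b)))"

definition KL :: "real \<Rightarrow> real \<Rightarrow> ereal" where
  "KL p q = xlogxy p q + xlogxy (1 - p) (1 - q)"

definition rho_neg_pow :: "real \<Rightarrow> ereal \<Rightarrow> real" where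
  "rho_neg_pow \<rho> k = (if k = \<infinity> then 0 else \<rho> powr (- real_of_ereal k))"

definition rpow :: "real \<Rightarrow> real \<Rightarrow> real" where
  "rpow a b = (if b = 0 then 1 else a powr b)"

definition oplus :: "real \<Rightarrow> ((nat \<Rightarrow> bool) \<Rightarrow> real) \<Rightarrow> ((nat \<Rightarrow> bool) \<Rightarrow> real)
    \<Rightarrow> (nat \<Rightarrow> bool) \<Rightarrow> real" where
  "oplus \<rho> x y \<eta> = (SUP p \<in> {p. p \<in> \<rat> \<and> 0 \<le> p \<and> p \<le> 1}.
      rho_neg_pow \<rho> (KL p (qlim \<eta>)) * rpow (x \<eta>) p * rpow (y \<eta>) (1 - p))"

end

theory Submission
  imports Defs
begin

text \<open>Reindexing the supremum by \<open>p \<mapsto> 1 - p\<close> swaps \<open>x\<close> and \<open>y\<close> and turns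
  \<open>KL(p; q)\<close> into \<open>KL(1 - p; 1 - q)\<close>, so at \<open>q = 1/2\<close> the operation is commutative.
  Conversely, for the constants \<open>x = 1\<close>, \<open>y = 0\<close> only the endpoint \<open>p = 1\<close> (resp. \<open>p = 0\<close>)
  contributes, and the two orders give \<open>q\<^bsup>ln \<rho>\<^esup>\<close> and \<open>(1 - q)\<^bsup>ln \<rho>\<^esup>\<close>, which differ unless
  \<open>q = 1/2\<close>.\<close>

lemma a_cnt_le: "a_cnt n \<eta> \<le> n"
proof -
  have "{i. i < n \<and> \<eta> i} \<subseteq> {..<n}" by auto
  then show ?thesis unfolding a_cnt_def using card_mono[of "{..<n}"] by fastforce
qed

lemma qlim_bounds:
  assumes "\<eta> \<in> Yset" shows "0 \<le> qlim \<eta>" and "qlim \<eta> \<le> 1"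
proof -
  let ?f = "\<lambda>n. real (a_cnt n \<eta>) / real n"
  have lim: "?f \<longlonglongrightarrow> qlim \<eta>"
    using assms unfolding Yset_def qlim_def by (simp add: convergent_LIMSEQ_iff)
  have "?f n \<le> 1" for n
    using a_cnt_le[of n \<eta>] by (cases "n = 0") (auto simp: divide_le_eq_1)
  then show "qlim \<eta> \<le> 1" using LIMSEQ_le_const2[OF lim] by blast
  show "0 \<le> qlim \<eta>" using LIMSEQ_le_const[OF lim] by simp
qed

lemma rho_neg_pow_nonneg: "rho_neg_pow \<rho> k \<ge> 0"
  unfolding rho_neg_pow_def by auto

lemma KL_one_minus: "KL (1 - p) (1 - q) = KL p q"
  unfolding KL_def by (simp add: add.commute)

lemma rho_neg_pow_KL_one:
  assumes "\<rho> > 0" "q \<ge> 0"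
  shows "rho_neg_pow \<rho> (KL 1 q) = q powr ln \<rho>"
proof (cases "q = 0")
  case False
  then have "KL 1 q = ereal (- ln q)" using assms by (simp add: KL_def xlogxy_def ln_div)
  then show ?thesis using assms False by (simp add: rho_neg_pow_def powr_def)
qed (simp add: KL_def xlogxy_def rho_neg_pow_def)

lemma rho_neg_pow_KL_zero:
  assumes "\<rho> > 0" "q \<le> 1"
  shows "rho_neg_pow \<rho> (KL 0 q) = (1 - q) powr ln \<rho>"
  using rho_neg_pow_KL_one[of \<rho> "1 - q"] KL_one_minus[of 1 "1 - q"] assms by simp

lemma SUP_eq_single_nonzero:
  fixes f :: "'a \<Rightarrow> real"
  assumes "a \<in> A" "f a \<ge> 0" "\<And>p. p \<in> A \<Longrightarrow> p \<noteq> a \<Longrightarrow> f p = 0"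
  shows "(SUP p\<in>A. f p) = f a"
proof (rule cSup_eq_maximum)
  show "f a \<in> f ` A" using assms(1) by blast
  show "z \<le> f a" if "z \<in> f ` A" for z
  proof -
    obtain p where "p \<in> A" "z = f p" using \<open>z \<in> f ` A\<close> by blast
    then show ?thesis using assms by (cases "p = a") auto
  qed
qed

lemma oplus_one_zero:
  "oplus \<rho> (\<lambda>_. 1) (\<lambda>_. 0) \<eta> = rho_neg_pow \<rho> (KL 1 (qlim \<eta>))"
  unfolding oplus_def
  by (subst SUP_eq_single_nonzero[where a = 1]) (auto simp: rpow_def rho_neg_pow_nonneg)

lemma oplus_zero_one:
  "oplus \<rho> (\<lambda>_. 0) (\<lambda>_. 1) \<eta> = rho_neg_pow \<rho> (KL 0 (qlim \<eta>))"
  unfolding oplus_def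
  by (subst SUP_eq_single_nonzero[where a = 0]) (auto simp: rpow_def rho_neg_pow_nonneg)

lemma oplus_commute_at_half:
  assumes "qlim \<eta> = 1/2"
  shows "oplus \<rho> x y \<eta> = oplus \<rho> y x \<eta>"
proof -
  let ?S = "{p. p \<in> \<rat> \<and> 0 \<le> p \<and> p \<le> (1::real)}"
  have reflect: "(\<lambda>p. 1 - p) ` ?S = ?S"
    by (auto intro!: image_eqI[where x = "1 - _"])
  have "oplus \<rho> y x \<eta> = (SUP p \<in> (\<lambda>p. 1 - p) ` ?S.
      rho_neg_pow \<rho> (KL p (qlim \<eta>)) * rpow (y \<eta>) p * rpow (x \<eta>) (1 - p))"
    unfolding oplus_def reflect ..
  also have "\<dots> = (SUP p \<in> ?S.
      rho_neg_pow \<rho> (KL (1 - p) (1 - 1/2)) * rpow (x \<eta>) p * rpow (y \<eta>) (1 - p))"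
    unfolding assms by (simp add: image_image mult_ac)
  also have "\<dots> = oplus \<rho> x y \<eta>"
    unfolding oplus_def assms KL_one_minus ..
  finally show ?thesis by simp
qed

lemma qlim_eq_half_of_oplus_commute:
  assumes "\<rho> > 1" "\<eta> \<in> Yset"
    and "oplus \<rho> (\<lambda>_. 1) (\<lambda>_. 0) \<eta> = oplus \<rho> (\<lambda>_. 0) (\<lambda>_. 1) \<eta>"
  shows "qlim \<eta> = 1/2"
proof -
  let ?q = "qlim \<eta>"
  have q: "0 \<le> ?q" "?q \<le> 1" using qlim_bounds[OF assms(2)] by auto
  have "?q powr ln \<rho> = (1 - ?q) powr ln \<rho>"
    using assms(1,3) q by (simp add: oplus_one_zero oplus_zero_one
        rho_neg_pow_KL_one rho_neg_pow_KL_zero)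
  moreover have "ln \<rho> > 0" using assms(1) by simp
  ultimately have "?q = 1 - ?q"
    using q powr_less_mono2[of "ln \<rho>" ?q "1 - ?q"] powr_less_mono2[of "ln \<rho>" "1 - ?q" ?q]
    by (metis diff_ge_0_iff_ge linorder_neqE_linordered_idom order_less_irrefl)
  then show ?thesis by simp
qed

theorem proposition8p5:
  fixes \<rho> :: real and Z :: "(nat \<Rightarrow> bool) set"
  assumes "\<rho> > 1" and "Z \<subseteq> Yset"
  shows "(\<forall>x y. continuous_map (subtopology cantorX Z) euclideanreal x
              \<and> continuous_map (subtopology cantorX Z) euclideanreal y
              \<and> (\<forall>\<eta>\<in>Z. x \<eta> \<ge> 0 \<and> y \<eta> \<ge> 0)
              \<longrightarrow> (\<forall>\<eta>\<in>Z. oplus \<rho> x y \<eta> = oplus \<rho> y x \<eta>))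
         \<longleftrightarrow> Z \<subseteq> Zhalf"
    (is "?commutes \<longleftrightarrow> _")
proof
  assume ?commutes
  then have "oplus \<rho> (\<lambda>_. 1) (\<lambda>_. 0) \<eta> = oplus \<rho> (\<lambda>_. 0) (\<lambda>_. 1) \<eta>" if "\<eta> \<in> Z" for \<eta>
    using that by (auto simp: continuous_map_const)
  then show "Z \<subseteq> Zhalf"
    using assms qlim_eq_half_of_oplus_commute by (auto simp: Zhalf_def)
next
  assume "Z \<subseteq> Zhalf"
  then show ?commutes using oplus_commute_at_half by (auto simp: Zhalf_def)
qed

end
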